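(* Let $n\geqslant1$, $N\in\mathbb{N}$, $\gamma\in\mathbb{R}\setminus\{0\}$, let $a_0,\ldots,a_n$ be functions holomorphic near $t=0$ with $a_n\equiv1$, and let $M(x,t,u_0,\ldots,u_n)$ be meromorphic in $t$ and holomorphic in the remaining variables near $0\in\mathbb{C}^{n+3}$. Assume that for every integer $k\geqslant1$ the polynomial $$P_k(\lambda)=\sum_{j=0}^n a_j(0)\,(k+N+{\rm i}\gamma\lambda)^j$$ has no integer roots. Suppose the equation $$\sum_{j=0}^n a_j(x^{{\rm i}\gamma})(\delta+N)^j u=x\,M(x,x^{{\rm i}\gamma},u,\delta u,\ldots,\delta^n u),\qquad\delta=x\frac{d}{dx},$$ has a formal solution $\psi=\sum_{k=1}^\infty c_k(x^{{\rm i}\gamma})x^k$ with each $c_k$ meromorphic at $t=0$. Then $\psi$ is the unique exotic formal series of the form $\sum_{k=1}^\infty c_k(x^{{\rm i}\gamma})x^k$ (with $c_k$ meromorphic at $t=0$) satisfying this equation.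
   Context: $x^{{\rm i}\gamma}=e^{{\rm i}\gamma\ln x}$. On exotic series $\delta$ acts termwise by $\delta\bigl(p(x^{{\rm i}\gamma})x^k\bigr)=\bigl((k+{\rm i}\gamma\,t\tfrac{d}{dt})p\bigr)(x^{{\rm i}\gamma})x^k$, and substitution into $M$ is formal, collecting terms by powers of $x$. *)

theory Defs
  imports "HOL-Complex_Analysis.Complex_Analysis" "HOL-Library.Function_Algebras"
    "HOL-Computational_Algebra.Formal_Power_Series"
begin

text \<open>Exotic formal series  sum_k c_k(x^{i gamma}) x^k  are represented as formal power
  series in x whose coefficients are functions of the variable t (standing for x^{i gamma});
  the ring structure on functions is pointwise (Function_Algebras).  Coefficients are compared
  as germs at t = 0 (equality on a punctured neighbourhood of 0).\<close>

type_synonym exotic = "(complex \<Rightarrow> complex) fps"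

definition delta_shift :: "real \<Rightarrow> nat \<Rightarrow> exotic \<Rightarrow> exotic" where
  "delta_shift \<gamma> N p = Abs_fps (\<lambda>k t. of_nat (k + N) * (p $ k) t
                                   + \<i> * of_real \<gamma> * t * deriv (p $ k) t)"

abbreviation delta :: "real \<Rightarrow> exotic \<Rightarrow> exotic" where
  "delta \<gamma> \<equiv> delta_shift \<gamma> 0"

definition multi_idx :: "nat \<Rightarrow> (nat \<Rightarrow> nat) set" where
  "multi_idx n = PiE {..n} (\<lambda>_. UNIV)"

text \<open>M(x,t,u_0,..,u_n) = sum_{i,beta} Mc i beta (t) x^i u^beta, where Mc i beta is meromorphic
  in t.  "Meromorphic in t and holomorphic in the other variables near 0 in C^{n+3}":
  t^m M is holomorphic near 0 for some m, i.e. Mc i beta t = t^{-m} sum_l mc i l beta t^l with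
  the full power series absolutely convergent on a polydisc of radius rho > 0.\<close>
definition mero_holo_coeffs :: "nat \<Rightarrow> (nat \<Rightarrow> (nat \<Rightarrow> nat) \<Rightarrow> complex \<Rightarrow> complex) \<Rightarrow> bool" where
  "mero_holo_coeffs n Mc \<longleftrightarrow>
     (\<exists>(m::nat) (mc :: nat \<Rightarrow> nat \<Rightarrow> (nat \<Rightarrow> nat) \<Rightarrow> complex) (\<rho>::real). \<rho> > 0 \<and>
        (\<lambda>(i, l, \<beta>). norm (mc i l \<beta>) * \<rho> ^ (i + l + sum \<beta> {..n}))
            summable_on (UNIV \<times> UNIV \<times> multi_idx n) \<and>
        (\<forall>i. \<forall>\<beta>\<in>multi_idx n. \<forall>t. t \<noteq> 0 \<and> norm t < \<rho> \<longrightarrow>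
            Mc i \<beta> t = inverse (t ^ m) * (\<Sum>l. mc i l \<beta> * t ^ l)))"

text \<open>Coefficient of x^K in  x M(x, x^{i gamma}, u, delta u, ..., delta^n u), computed formally.
  Since u has no x^0 term, only i < K and beta_j < K contribute.\<close>
definition rhs_coeff :: "real \<Rightarrow> nat \<Rightarrow> (nat \<Rightarrow> (nat \<Rightarrow> nat) \<Rightarrow> complex \<Rightarrow> complex)
                         \<Rightarrow> exotic \<Rightarrow> nat \<Rightarrow> complex \<Rightarrow> complex" where
  "rhs_coeff \<gamma> n Mc u K =
     (if K = 0 then 0 else
      (\<Sum>i<K. \<Sum>\<beta>\<in>PiE {..n} (\<lambda>_. {..<K}).
          Mc i \<beta> * (fps_X ^ i * (\<Prod>j\<le>n. ((delta \<gamma> ^^ j) u) ^ \<beta> j)) $ (K - 1)))"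

definition lhs :: "real \<Rightarrow> nat \<Rightarrow> nat \<Rightarrow> (nat \<Rightarrow> complex \<Rightarrow> complex) \<Rightarrow> exotic \<Rightarrow> exotic" where
  "lhs \<gamma> n N a u = (\<Sum>j\<le>n. fps_const (a j) * (delta_shift \<gamma> N ^^ j) u)"

definition exotic_solution ::
  "real \<Rightarrow> nat \<Rightarrow> nat \<Rightarrow> (nat \<Rightarrow> complex \<Rightarrow> complex)
     \<Rightarrow> (nat \<Rightarrow> (nat \<Rightarrow> nat) \<Rightarrow> complex \<Rightarrow> complex) \<Rightarrow> exotic \<Rightarrow> bool" where
  "exotic_solution \<gamma> n N a Mc u \<longleftrightarrow>
     u $ 0 = 0 \<and> (\<forall>k. (u $ k) meromorphic_on {0}) \<and>
     (\<forall>K. \<forall>\<^sub>F t in at 0. (lhs \<gamma> n N a u $ K) t = rhs_coeff \<gamma> n Mc u K t)"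

end

theory Submission
  imports Defs
begin

text \<open>Uniqueness is proved coefficient by coefficient.  Because of the factor x in front of M
  and because u has no constant term, the coefficient of x^K on the right-hand side only involves
  c_1, ..., c_(K-1).  Hence, if two solutions agree below K, the difference d of their K-th
  coefficients satisfies  sum_j a_j(t) (K + N + i gamma t d/dt)^j d = 0  near t = 0.  Writing the
  meromorphic function d as t^m g with g(0) \<noteq> 0, the operator K + N + i gamma t d/dt acts on
  t^m g as t^m times K + N + i gamma m + i gamma t d/dt acting on g; evaluating at t = 0 gives
  P_K(m) g(0) = 0, contradicting the assumption that P_K has no integer roots.\<close>

lemma sum_fun_apply: "(\<Sum>x\<in>A. f x) t = (\<Sum>x\<in>A. (f x :: 'b \<Rightarrow> 'c::comm_monoid_add) t)"
  by (induction A rule: infinite_finite_induct) auto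

definition euler_op :: "real \<Rightarrow> complex \<Rightarrow> (complex \<Rightarrow> complex) \<Rightarrow> complex \<Rightarrow> complex" where
  "euler_op \<gamma> c p = (\<lambda>t. c * p t + \<i> * of_real \<gamma> * t * deriv p t)"

lemma delta_shift_nth: "delta_shift \<gamma> N p $ k = euler_op \<gamma> (of_nat (k + N)) (p $ k)"
  by (simp add: delta_shift_def euler_op_def)

lemma delta_shift_funpow_nth:
  "(delta_shift \<gamma> N ^^ j) p $ k = (euler_op \<gamma> (of_nat (k + N)) ^^ j) (p $ k)"
  by (induction j) (simp_all add: delta_shift_nth)

lemma lhs_nth:
  "lhs \<gamma> n N a u $ K = (\<lambda>t. \<Sum>j\<le>n. a j t * (euler_op \<gamma> (of_nat (K + N)) ^^ j) (u $ K) t)"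
  by (auto simp: lhs_def fps_sum_nth delta_shift_funpow_nth sum_fun_apply fps_mult_left_const_nth)

lemma euler_op_analytic: "f analytic_on S \<Longrightarrow> euler_op \<gamma> c f analytic_on S"
  unfolding euler_op_def by (intro analytic_intros)

lemma euler_op_funpow_analytic: "f analytic_on S \<Longrightarrow> (euler_op \<gamma> c ^^ j) f analytic_on S"
  by (induction j) (auto intro: euler_op_analytic)

lemma euler_op_cong:
  assumes "open S" "\<forall>t\<in>S. f t = g t" "t \<in> S"
  shows "euler_op \<gamma> c f t = euler_op \<gamma> c g t"
proof -
  have "\<forall>\<^sub>F s in nhds t. f s = g s"
    using eventually_nhds_in_open[OF assms(1,3)] assms(2) by (auto elim: eventually_mono)
  then have "deriv f t = deriv g t" by (rule deriv_cong_ev) simp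
  with assms show ?thesis by (simp add: euler_op_def)
qed

lemma euler_op_funpow_cong:
  assumes "open S" "\<forall>t\<in>S. f t = g t"
  shows "\<forall>t\<in>S. (euler_op \<gamma> c ^^ j) f t = (euler_op \<gamma> c ^^ j) g t"
  by (induction j) (use assms in \<open>auto intro: euler_op_cong\<close>)

lemma eventually_euler_op_funpow_cong:
  assumes "\<forall>\<^sub>F t in at z. f t = g t"
  shows "\<forall>\<^sub>F t in at z. (euler_op \<gamma> c ^^ j) f t = (euler_op \<gamma> c ^^ j) g t"
proof -
  obtain S where S: "open S" "z \<in> S" "\<forall>t\<in>S. t \<noteq> z \<longrightarrow> f t = g t"
    using assms unfolding eventually_at_topological by auto
  have "\<forall>t\<in>S - {z}. (euler_op \<gamma> c ^^ j) f t = (euler_op \<gamma> c ^^ j) g t"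
    using S by (intro euler_op_funpow_cong) auto
  with eventually_at_in_open[OF S(1,2)] show ?thesis by (auto elim: eventually_mono)
qed

lemma euler_op_diff:
  assumes "f analytic_on {t}" "g analytic_on {t}"
  shows "euler_op \<gamma> c (\<lambda>t. f t - g t) t = euler_op \<gamma> c f t - euler_op \<gamma> c g t"
proof -
  have "deriv (\<lambda>t. f t - g t) t = deriv f t - deriv g t"
    using assms by (intro deriv_diff analytic_on_imp_differentiable_at) auto
  then show ?thesis by (simp only: euler_op_def) (simp add: algebra_simps)
qed

lemma euler_op_funpow_diff:
  assumes "open S" "f analytic_on S" "g analytic_on S"
  shows "\<forall>t\<in>S. (euler_op \<gamma> c ^^ j) (\<lambda>t. f t - g t) t
                 = (euler_op \<gamma> c ^^ j) f t - (euler_op \<gamma> c ^^ j) g t"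
proof (induction j)
  case 0 show ?case by simp
next
  case (Suc j)
  let ?E = "euler_op \<gamma> c"
  show ?case
  proof
    fix t assume t: "t \<in> S"
    have "(?E ^^ Suc j) (\<lambda>t. f t - g t) t = ?E (\<lambda>t. (?E ^^ j) f t - (?E ^^ j) g t) t"
      using euler_op_cong[OF assms(1) Suc.IH t] by simp
    also have "\<dots> = (?E ^^ Suc j) f t - (?E ^^ Suc j) g t"
      using assms t by (simp add: euler_op_diff euler_op_funpow_analytic analytic_on_subset)
    finally show "(?E ^^ Suc j) (\<lambda>t. f t - g t) t = (?E ^^ Suc j) f t - (?E ^^ Suc j) g t" .
  qed
qed

lemma eventually_euler_op_funpow_diff:
  assumes "isolated_singularity_at f z" "isolated_singularity_at g z"
  shows "\<forall>\<^sub>F t in at z. (euler_op \<gamma> c ^^ j) (\<lambda>t. f t - g t) t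
                        = (euler_op \<gamma> c ^^ j) f t - (euler_op \<gamma> c ^^ j) g t"
proof -
  obtain r1 r2 where r: "r1 > 0" "r2 > 0"
    "f analytic_on ball z r1 - {z}" "g analytic_on ball z r2 - {z}"
    using assms unfolding isolated_singularity_at_def by auto
  define S where "S = ball z (min r1 r2) - {z}"
  have "open S" by (simp add: S_def open_Diff)
  moreover have "f analytic_on S" "g analytic_on S"
    using r by (auto simp: S_def elim!: analytic_on_subset)
  moreover have "\<forall>\<^sub>F t in at z. t \<in> S"
    using eventually_at_in_open[of "ball z (min r1 r2)" z] r by (simp add: S_def)
  ultimately show ?thesis using euler_op_funpow_diff by (auto elim: eventually_mono)
qed

definition agree_upto :: "complex \<Rightarrow> nat \<Rightarrow> exotic \<Rightarrow> exotic \<Rightarrow> bool" where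
  "agree_upto t m p q \<longleftrightarrow> (\<forall>k\<le>m. (p $ k) t = (q $ k) t)"

lemma agree_upto_refl: "agree_upto t m p p"
  by (simp add: agree_upto_def)

lemma agree_upto_mult: "agree_upto t m p p' \<Longrightarrow> agree_upto t m q q' \<Longrightarrow> agree_upto t m (p * q) (p' * q')"
  unfolding agree_upto_def by (auto simp: fps_mult_nth sum_fun_apply intro!: sum.cong)

lemma agree_upto_power: "agree_upto t m p q \<Longrightarrow> agree_upto t m (p ^ e) (q ^ e)"
  by (induction e) (auto simp: agree_upto_refl agree_upto_mult)

lemma agree_upto_prod:
  "(\<And>j. j \<in> A \<Longrightarrow> agree_upto t m (f j) (g j)) \<Longrightarrow> agree_upto t m (\<Prod>j\<in>A. f j) (\<Prod>j\<in>A. g j)"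
  by (induction A rule: infinite_finite_induct) (auto simp: agree_upto_refl agree_upto_mult)

lemma rhs_coeff_eventually_eq:
  fixes u v :: exotic
  assumes "\<forall>k<K. \<forall>\<^sub>F t in at 0. (u $ k) t = (v $ k) t"
  shows "\<forall>\<^sub>F t in at 0. rhs_coeff \<gamma> n Mc u K t = rhs_coeff \<gamma> n Mc v K t"
proof (cases "K = 0")
  case True
  then show ?thesis by (simp add: rhs_coeff_def)
next
  case False
  with assms have "\<forall>\<^sub>F t in at 0. \<forall>j\<in>{..n}. \<forall>k\<in>{..<K}.
                     ((delta \<gamma> ^^ j) u $ k) t = ((delta \<gamma> ^^ j) v $ k) t"
    by (intro eventually_ball_finite ballI finite_atMost finite_lessThan)
       (auto simp: delta_shift_funpow_nth intro: eventually_euler_op_funpow_cong)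
  then have "\<forall>\<^sub>F t in at 0. \<forall>j\<in>{..n}. agree_upto t (K - 1) ((delta \<gamma> ^^ j) u) ((delta \<gamma> ^^ j) v)"
    using False by (auto simp: agree_upto_def elim!: eventually_mono)
  then show ?thesis
  proof (rule eventually_mono)
    fix t
    assume "\<forall>j\<in>{..n}. agree_upto t (K - 1) ((delta \<gamma> ^^ j) u) ((delta \<gamma> ^^ j) v)"
    then have "agree_upto t (K - 1) (fps_X ^ i * (\<Prod>j\<le>n. ((delta \<gamma> ^^ j) u) ^ \<beta> j))
                                    (fps_X ^ i * (\<Prod>j\<le>n. ((delta \<gamma> ^^ j) v) ^ \<beta> j))" for i \<beta>
      by (intro agree_upto_mult agree_upto_refl agree_upto_prod agree_upto_power) auto
    then show "rhs_coeff \<gamma> n Mc u K t = rhs_coeff \<gamma> n Mc v K t"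
      by (simp add: rhs_coeff_def agree_upto_def sum_fun_apply)
  qed
qed

lemma euler_op_funpow_at_0: "(euler_op \<gamma> c ^^ j) g 0 = c ^ j * g 0"
  by (induction j) (simp_all add: euler_op_def)

lemma euler_op_powi_mult:
  assumes "h analytic_on {t}" "t \<noteq> 0"
  shows "euler_op \<gamma> c (\<lambda>t. t powi m * h t) t
           = t powi m * euler_op \<gamma> (c + \<i> * of_real \<gamma> * of_int m) h t"
proof -
  have "((\<lambda>t. t powi m * h t) has_field_derivative
          of_int m * t powi (m - 1) * 1 * h t + deriv h t * t powi m) (at t)"
    using assms by (intro DERIV_mult DERIV_power_int DERIV_ident analytic_derivI) auto
  then have "deriv (\<lambda>t. t powi m * h t) t = of_int m * t powi (m - 1) * h t + deriv h t * t powi m"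
    by (simp add: DERIV_imp_deriv)
  moreover have "t powi m = t * t powi (m - 1)"
    using power_int_minus_mult[of t m] assms(2) by (simp add: mult.commute)
  ultimately show ?thesis by (simp add: euler_op_def algebra_simps)
qed

lemma euler_op_funpow_powi_mult:
  assumes "open S" "0 \<notin> S" "g analytic_on S" "\<forall>t\<in>S. f t = t powi m * g t"
  shows "\<forall>t\<in>S. (euler_op \<gamma> c ^^ j) f t
                 = t powi m * (euler_op \<gamma> (c + \<i> * of_real \<gamma> * of_int m) ^^ j) g t"
proof (induction j)
  case 0 show ?case using assms(4) by simp
next
  case (Suc j)
  let ?E = "euler_op \<gamma> c" and ?E' = "euler_op \<gamma> (c + \<i> * of_real \<gamma> * of_int m)"
  show ?case
  proof
    fix t assume t: "t \<in> S"
    have "(?E ^^ Suc j) f t = ?E (\<lambda>t. t powi m * (?E' ^^ j) g t) t"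
      using euler_op_cong[OF assms(1) Suc.IH t] by simp
    also have "\<dots> = t powi m * ?E' ((?E' ^^ j) g) t"
      using assms(2) t
      by (intro euler_op_powi_mult analytic_on_subset[OF euler_op_funpow_analytic[OF assms(3)]]) auto
    finally show "(?E ^^ Suc j) f t = t powi m * (?E' ^^ Suc j) g t" by simp
  qed
qed

lemma euler_poly_annihilates_imp_eventually_zero:
  fixes a :: "nat \<Rightarrow> complex \<Rightarrow> complex"
  assumes mero: "d meromorphic_on {0}"
    and r: "r > 0" and holo: "\<forall>j\<le>n. a j holomorphic_on ball 0 r"
    and no_root: "\<forall>z::int. (\<Sum>j\<le>n. a j 0 * (c + \<i> * of_real \<gamma> * of_int z) ^ j) \<noteq> 0"
    and annih: "\<forall>\<^sub>F t in at 0. (\<Sum>j\<le>n. a j t * (euler_op \<gamma> c ^^ j) d t) = 0"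
  shows "\<forall>\<^sub>F t in at 0. d t = 0"
proof (rule ccontr)
  assume "\<not> ?thesis"
  then have "\<exists>\<^sub>F t in at 0. d t \<noteq> 0" by (simp add: not_eventually)
  with mero obtain r' and g :: "complex \<Rightarrow> complex" and m :: int
    where g0: "g 0 \<noteq> 0" and r': "r' > 0" "g holomorphic_on cball 0 r'"
      and d_eq: "\<forall>t\<in>cball 0 r' - {0}. d t = g t * t powi m"
    using zorder_exist[of d 0] by (auto simp: meromorphic_at_iff)
  define c' where "c' = c + \<i> * of_real \<gamma> * of_int m"
  define R where "R = min r r'"
  define H where "H = (\<lambda>t. \<Sum>j\<le>n. a j t * (euler_op \<gamma> c' ^^ j) g t)"
  have g_an: "g analytic_on ball 0 R"
    using r' by (auto simp: R_def analytic_on_open intro: holomorphic_on_subset)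
  have "H analytic_on ball 0 R"
    unfolding H_def using holo g_an
    by (intro analytic_intros euler_op_funpow_analytic)
       (auto simp: R_def analytic_on_open intro: holomorphic_on_subset)
  then have "isCont H 0"
    using \<open>r > 0\<close> \<open>r' > 0\<close> by (intro analytic_at_imp_isCont) (auto simp: R_def elim: analytic_on_subset)
  then have "(H \<longlongrightarrow> H 0) (at 0)" by (simp add: isCont_def)
  moreover have "\<forall>\<^sub>F t in at 0. H t = 0"
  proof -
    have factor: "\<forall>t\<in>ball 0 R - {0}. (euler_op \<gamma> c ^^ j) d t = t powi m * (euler_op \<gamma> c' ^^ j) g t" for j
      unfolding c'_def using d_eq g_an
      by (intro euler_op_funpow_powi_mult) (auto simp: R_def mult.commute elim: analytic_on_subset)
    have "\<forall>\<^sub>F t in at 0. t \<in> ball 0 R - {0}"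
      using r r' by (intro eventually_at_in_open) (auto simp: R_def)
    then show ?thesis using annih
    proof eventually_elim
      case (elim t)
      then have "t powi m * H t = 0"
        by (simp add: H_def factor sum_distrib_left mult.left_commute)
      with elim show ?case by simp
    qed
  qed
  then have "(H \<longlongrightarrow> 0) (at 0)" by (rule tendsto_eventually)
  ultimately have "H 0 = 0" by (rule LIM_unique)
  moreover have "H 0 = (\<Sum>j\<le>n. a j 0 * c' ^ j) * g 0"
    by (simp add: H_def euler_op_funpow_at_0 sum_distrib_right mult.assoc)
  ultimately show False using g0 no_root by (simp add: c'_def)
qed

lemma exotic_solution_coeff_eq:
  fixes \<phi> \<psi> :: exotic
  assumes r: "r > 0" and holo: "\<forall>j\<le>n. a j holomorphic_on ball 0 r"
    and no_root: "\<forall>z::int. (\<Sum>j\<le>n. a j 0 * (of_nat (K + N) + \<i> * of_real \<gamma> * of_int z) ^ j) \<noteq> 0"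
    and \<phi>: "exotic_solution \<gamma> n N a Mc \<phi>" and \<psi>: "exotic_solution \<gamma> n N a Mc \<psi>"
    and below: "\<forall>k<K. \<forall>\<^sub>F t in at 0. (\<phi> $ k) t = (\<psi> $ k) t"
  shows "\<forall>\<^sub>F t in at 0. (\<phi> $ K) t = (\<psi> $ K) t"
proof -
  let ?E = "euler_op \<gamma> (of_nat (K + N))"
  define d where "d = (\<lambda>t. (\<phi> $ K) t - (\<psi> $ K) t)"
  have mero: "(\<phi> $ K) meromorphic_on {0}" "(\<psi> $ K) meromorphic_on {0}"
    using \<phi> \<psi> by (auto simp: exotic_solution_def)
  have "\<forall>\<^sub>F t in at 0. \<forall>j\<in>{..n}. (?E ^^ j) d t = (?E ^^ j) (\<phi> $ K) t - (?E ^^ j) (\<psi> $ K) t"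
    unfolding d_def using mero
    by (intro eventually_ball_finite ballI eventually_euler_op_funpow_diff)
       (auto simp: meromorphic_at_iff)
  moreover have "\<forall>\<^sub>F t in at 0. rhs_coeff \<gamma> n Mc \<phi> K t = rhs_coeff \<gamma> n Mc \<psi> K t"
    using below by (rule rhs_coeff_eventually_eq)
  moreover have "\<forall>\<^sub>F t in at 0. (lhs \<gamma> n N a \<phi> $ K) t = rhs_coeff \<gamma> n Mc \<phi> K t"
    and "\<forall>\<^sub>F t in at 0. (lhs \<gamma> n N a \<psi> $ K) t = rhs_coeff \<gamma> n Mc \<psi> K t"
    using \<phi> \<psi> by (simp_all add: exotic_solution_def)
  ultimately have annih: "\<forall>\<^sub>F t in at 0. (\<Sum>j\<le>n. a j t * (?E ^^ j) d t) = 0"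
  proof eventually_elim
    case (elim t)
    then have "(\<Sum>j\<le>n. a j t * (?E ^^ j) d t)
                 = (\<Sum>j\<le>n. a j t * (?E ^^ j) (\<phi> $ K) t) - (\<Sum>j\<le>n. a j t * (?E ^^ j) (\<psi> $ K) t)"
      by (simp add: right_diff_distrib sum_subtractf)
    also have "\<dots> = 0"
      using elim(2-4) by (simp add: lhs_nth)
    finally show ?case .
  qed
  have "d meromorphic_on {0}"
    unfolding d_def using mero by (rule meromorphic_on_diff)
  then have "\<forall>\<^sub>F t in at 0. d t = 0"
    by (rule euler_poly_annihilates_imp_eventually_zero[OF _ r holo no_root annih])
  then show ?thesis by (simp add: d_def)
qed

theorem lemma2:
  fixes n N :: nat and \<gamma> :: real
    and a :: "nat \<Rightarrow> complex \<Rightarrow> complex"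
    and Mc :: "nat \<Rightarrow> (nat \<Rightarrow> nat) \<Rightarrow> complex \<Rightarrow> complex"
    and \<psi> :: exotic
  assumes "n \<ge> 1" and "\<gamma> \<noteq> 0"
    and "\<exists>r>0. \<forall>j\<le>n. a j holomorphic_on ball 0 r"
    and "a n = (\<lambda>_. 1)"
    and "mero_holo_coeffs n Mc"
    and "\<forall>k::nat\<ge>1. \<forall>z::int.
           (\<Sum>j\<le>n. a j 0 * (of_nat (k + N) + \<i> * of_real \<gamma> * of_int z) ^ j) \<noteq> 0"
    and "exotic_solution \<gamma> n N a Mc \<psi>"
  shows "\<forall>\<phi>. exotic_solution \<gamma> n N a Mc \<phi> \<longrightarrow>
           (\<forall>k. \<forall>\<^sub>F t in at 0. (\<phi> $ k) t = (\<psi> $ k) t)"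
proof (intro allI impI)
  fix \<phi> k
  assume \<phi>: "exotic_solution \<gamma> n N a Mc \<phi>"
  obtain r where r: "r > 0" "\<forall>j\<le>n. a j holomorphic_on ball 0 r"
    using assms(3) by auto
  show "\<forall>\<^sub>F t in at 0. (\<phi> $ k) t = (\<psi> $ k) t"
  proof (induction k rule: less_induct)
    case (less K)
    show ?case
    proof (cases "K = 0")
      case True
      then show ?thesis using \<phi> assms(7) by (simp add: exotic_solution_def)
    next
      case False
      then have "K \<ge> 1" by simp
      with assms(6) have "\<forall>z::int. (\<Sum>j\<le>n. a j 0 * (of_nat (K + N) + \<i> * of_real \<gamma> * of_int z) ^ j) \<noteq> 0"
        by blast
      then show ?thesis
        by (rule exotic_solution_coeff_eq[OF r _ \<phi> assms(7)]) (simp add: less.IH)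
    qed
  qed
qed

end
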